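(* Let $G$ and $H$ be graphs and let $\ell\ge 1$ be an integer. If $G$ has an $H$-partition of layered width $\ell$, then $\mathrm{tn}(G)\le 3\ell\cdot \mathrm{tn}(H)$.
   Context: All graphs are finite, simple and undirected. A $t$-track assignment of a graph $G$ is a partition of $V(G)$ into $t$ sets $V_1,\dots,V_t$ (tracks), each an independent set of $G$, together with a total order $<_i$ on each $V_i$. An X-crossing consists of two edges $(u,v)$ and $(x,y)$ with $u,x\in V_i$, $v,y\in V_j$ ($i\neq j$), $u<_i x$ and $y<_j v$. A $t$-track layout is a $t$-track assignment with no X-crossing; the track number $\mathrm{tn}(G)$ is the minimum $t$ for which $G$ has a $t$-track layout. An $H$-partition of $G$ is a partition of $V(G)$ into disjoint bags $\{A_x : x\in V(H)\}$ indexed by $V(H)$ such that for every edge $(u,v)\in E(G)$ either $u,v\in A_x$ for some $x$, or there is an edge $(x,y)\in E(H)$ with $u\in A_x$, $v\in A_y$. A layering of $G$ is an ordered partition $(V_0,V_1,\dots)$ of $V(G)$ such that for every edge $(v,w)$ with $v\in V_i$, $w\in V_j$ we have $|i-j|\le 1$. The layered width of an $H$-partition is the minimum $\ell$ such that for some layering $(V_0,V_1,\dots)$ of $G$, $|A_x\cap V_i|\le \ell$ for every $x\in V(H)$ and every $i\ge 0$. *)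

theory Defs
  imports Main
begin

definition graph :: "'a set \<Rightarrow> 'a set set \<Rightarrow> bool" where
  "graph V E \<longleftrightarrow> finite V \<and> (\<forall>e\<in>E. \<exists>u v. e = {u, v} \<and> u \<noteq> v \<and> u \<in> V \<and> v \<in> V)"

definition track_layout ::
  "'a set \<Rightarrow> 'a set set \<Rightarrow> nat \<Rightarrow> ('a \<Rightarrow> nat) \<Rightarrow> (nat \<Rightarrow> ('a \<times> 'a) set) \<Rightarrow> bool" where
  "track_layout V E t tr lt \<longleftrightarrow>
     (\<forall>v\<in>V. tr v < t) \<and>
     (\<forall>u v. {u, v} \<in> E \<longrightarrow> tr u \<noteq> tr v) \<and>
     (\<forall>i<t. strict_linear_order_on {v\<in>V. tr v = i} (lt i)) \<and>
     (\<forall>u v x y. {u, v} \<in> E \<longrightarrow> {x, y} \<in> E \<longrightarrow> tr u = tr x \<longrightarrow> tr v = tr y \<longrightarrow>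
        tr u \<noteq> tr v \<longrightarrow> (u, x) \<in> lt (tr u) \<longrightarrow> (y, v) \<in> lt (tr v) \<longrightarrow> False)"

definition track_number :: "'a set \<Rightarrow> 'a set set \<Rightarrow> nat" where
  "track_number V E = (LEAST t. \<exists>tr lt. track_layout V E t tr lt)"

text \<open>An H-partition of G, given by the map f sending each vertex of G to the index
  of its bag (bag A_x = {v. f v = x}).\<close>
definition H_partition ::
  "'a set \<Rightarrow> 'a set set \<Rightarrow> 'b set \<Rightarrow> 'b set set \<Rightarrow> ('a \<Rightarrow> 'b) \<Rightarrow> bool" where
  "H_partition VG EG VH EH f \<longleftrightarrow>
     (\<forall>v\<in>VG. f v \<in> VH) \<and>
     (\<forall>u v. {u, v} \<in> EG \<longrightarrow> f u = f v \<or> {f u, f v} \<in> EH)"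

definition layering :: "'a set \<Rightarrow> 'a set set \<Rightarrow> ('a \<Rightarrow> nat) \<Rightarrow> bool" where
  "layering V E L \<longleftrightarrow> (\<forall>v w. {v, w} \<in> E \<longrightarrow> L v \<le> L w + 1 \<and> L w \<le> L v + 1)"

definition layered_width :: "'a set \<Rightarrow> 'a set set \<Rightarrow> ('a \<Rightarrow> 'b) \<Rightarrow> nat" where
  "layered_width V E f = (LEAST l. \<exists>L. layering V E L \<and>
      (\<forall>x i. card {v\<in>V. f v = x \<and> L v = i} \<le> l))"

end

theory Submission
  imports Defs
begin

text \<open>A vertex \<open>v\<close> of \<open>G\<close> is
  put on the track indexed by the triple (track of its bag in \<open>H\<close>, its layer mod 3, its rank
  among the at most \<open>l\<close> vertices sharing its bag and layer); a track is ordered by layer first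
  and by the order of the bags in \<open>H\<close> second. Edges join layers differing by at most one, so
  two edges between the same pair of tracks either lie in the same pair of layers or are shifted
  by the same amount; in the latter case they cannot cross, and in the former a crossing would
  give an X-crossing in the layout of \<open>H\<close>, or contradict irreflexivity when both edges lie
  inside a single bag.\<close>

lemma graph_edge:
  assumes "graph V E" "{u, v} \<in> E"
  shows "u \<in> V \<and> v \<in> V \<and> u \<noteq> v"
proof -
  obtain a b where "{u, v} = {a, b}" "a \<noteq> b" "a \<in> V" "b \<in> V"
    using assms unfolding graph_def by blast
  then show ?thesis by (metis doubleton_eq_iff)
qed

lemma track_layout_exists:
  assumes "graph V E"
  shows "\<exists>t tr lt. track_layout V E t tr lt"
proof -
  have "finite V" using assms by (simp add: graph_def)
  then obtain h where h: "bij_betw h V {0..<card V}" using ex_bij_betw_finite_nat by blast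
  have "track_layout V E (card V) h (\<lambda>_. {})"
    unfolding track_layout_def
  proof (intro conjI allI impI)
    show "\<forall>v\<in>V. h v < card V" using h by (auto simp: bij_betw_def)
    fix u v assume "{u, v} \<in> E"
    then show "h u \<noteq> h v" using graph_edge[OF assms] h by (metis bij_betw_def inj_on_def)
  next
    fix i
    show "strict_linear_order_on {v \<in> V. h v = i} {}"
      unfolding strict_linear_order_on_def total_on_def irrefl_def trans_def
      using h by (auto simp: bij_betw_def inj_on_def)
  qed auto
  then show ?thesis by blast
qed

lemma track_number_attained:
  assumes "graph V E"
  obtains tr lt where "track_layout V E (track_number V E) tr lt"
  using LeastI_ex[OF track_layout_exists[OF assms]] unfolding track_number_def by blast

lemma track_number_le:
  assumes "track_layout V E t tr lt"
  shows "track_number V E \<le> t"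
  unfolding track_number_def using assms by (blast intro: Least_le)

lemma layered_width_attained:
  assumes "finite V"
  obtains L where "layering V E L"
    and "\<And>x i. card {v\<in>V. f v = x \<and> L v = i} \<le> layered_width V E f"
proof -
  have "\<exists>L. layering V E L \<and> (\<forall>x i. card {v\<in>V. f v = x \<and> L v = i} \<le> card V)"
    by (rule exI[of _ "\<lambda>_. 0"]) (auto simp: layering_def assms card_mono)
  then have "\<exists>L. layering V E L \<and> (\<forall>x i. card {v\<in>V. f v = x \<and> L v = i} \<le>
      (LEAST n. \<exists>L. layering V E L \<and> (\<forall>x i. card {v\<in>V. f v = x \<and> L v = i} \<le> n)))"
    by (rule LeastI)
  then show ?thesis using that unfolding layered_width_def by blast
qed

lemma ex_fibrewise_injective_index:
  fixes q :: "'a \<Rightarrow> 'c"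
  assumes "finite V" and "\<And>c. card {v\<in>V. q v = c} \<le> l"
  obtains k :: "'a \<Rightarrow> nat" where "\<And>v. v \<in> V \<Longrightarrow> k v < l"
    and "\<And>u v. u \<in> V \<Longrightarrow> v \<in> V \<Longrightarrow> q u = q v \<Longrightarrow> k u = k v \<Longrightarrow> u = v"
proof -
  define F where "F c = {v\<in>V. q v = c}" for c
  have "\<exists>h. bij_betw h (F c) {0..<card (F c)}" for c
    using assms(1) by (intro ex_bij_betw_finite_nat) (simp add: F_def)
  then obtain g where g: "\<And>c. bij_betw (g c) (F c) {0..<card (F c)}" by metis
  define k where "k v = g (q v) v" for v
  have in_fibre: "v \<in> F (q v)" if "v \<in> V" for v using that by (simp add: F_def)
  show ?thesis
  proof (intro that)
    fix v assume "v \<in> V"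
    then have "k v < card (F (q v))"
      using g[of "q v"] in_fibre unfolding k_def bij_betw_def by auto
    then show "k v < l" using assms(2)[of "q v"] by (simp add: F_def)
  next
    fix u v assume "u \<in> V" "v \<in> V" "q u = q v" "k u = k v"
    then show "u = v" using g[of "q v"] in_fibre unfolding k_def bij_betw_def inj_on_def by metis
  qed
qed

lemma adjacent_eq_if_mod3_eq:
  fixes a b :: nat
  assumes "a \<le> b + 1" "b \<le> a + 1" "a mod 3 = b mod 3"
  shows "a = b"
proof -
  have "b = a + 1 \<or> b = a \<or> a = b + 1" using assms by auto
  then show ?thesis using assms(3) by (auto simp: mod_Suc split: if_splits)
qed

lemma adjacent_same_shift_if_mod3_eq:
  fixes a b c d :: nat
  assumes "a mod 3 = c mod 3" "b mod 3 = d mod 3"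
    and "a \<le> b + 1" "b \<le> a + 1" "c \<le> d + 1" "d \<le> c + 1"
  shows "int c - int a = int d - int b"
proof -
  have "b = a + 1 \<or> b = a \<or> a = b + 1" "d = c + 1 \<or> d = c \<or> c = d + 1" using assms by auto
  then show ?thesis using assms(1,2) by (auto simp: mod_Suc split: if_splits)
qed

lemma strict_linear_order_onD:
  assumes "strict_linear_order_on A r"
  shows "trans r" "irrefl r" "total_on A r"
  using assms by (simp_all add: strict_linear_order_on_def)

locale partition_layering =
  fixes VG :: "'a set" and EG :: "'a set set" and VH :: "'b set" and EH :: "'b set set"
    and f :: "'a \<Rightarrow> 'b" and t :: nat and trH :: "'b \<Rightarrow> nat" and ltH :: "nat \<Rightarrow> ('b \<times> 'b) set"
    and L :: "'a \<Rightarrow> nat" and l :: nat and k :: "'a \<Rightarrow> nat"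
  assumes graph: "graph VG EG"
    and partition: "H_partition VG EG VH EH f"
    and layout: "track_layout VH EH t trH ltH"
    and layering: "layering VG EG L"
    and index_lt: "\<And>v. v \<in> VG \<Longrightarrow> k v < l"
    and index_inj: "\<And>u v. u \<in> VG \<Longrightarrow> v \<in> VG \<Longrightarrow> f u = f v \<Longrightarrow> L u = L v \<Longrightarrow> k u = k v \<Longrightarrow> u = v"
begin

definition track :: "'a \<Rightarrow> nat" where
  "track v = (3 * trH (f v) + L v mod 3) * l + k v"

definition order :: "nat \<Rightarrow> ('a \<times> 'a) set" where
  "order i = {(u, v). u \<in> VG \<and> v \<in> VG \<and> track u = i \<and> track v = i \<and>
      (L u < L v \<or> (L u = L v \<and> (f u, f v) \<in> ltH (trH (f u))))}"

lemma bag_in_VH: "v \<in> VG \<Longrightarrow> f v \<in> VH"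
  using partition by (simp add: H_partition_def)

lemma edge_bags: "{u, v} \<in> EG \<Longrightarrow> f u = f v \<or> {f u, f v} \<in> EH"
  using partition by (simp add: H_partition_def)

lemma edge_layers: "{u, v} \<in> EG \<Longrightarrow> L u \<le> L v + 1 \<and> L v \<le> L u + 1"
  using layering by (simp add: layering_def)

lemma H_track_lt: "x \<in> VH \<Longrightarrow> trH x < t"
  using layout by (simp add: track_layout_def)

lemma H_edge_tracks: "{x, y} \<in> EH \<Longrightarrow> trH x \<noteq> trH y"
  using layout by (simp add: track_layout_def)

lemma H_track_order: "v \<in> VG \<Longrightarrow> strict_linear_order_on {x\<in>VH. trH x = trH (f v)} (ltH (trH (f v)))"
  using layout bag_in_VH H_track_lt by (simp add: track_layout_def)

lemma track_eq_iff:
  assumes "u \<in> VG" "v \<in> VG"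
  shows "track u = track v \<longleftrightarrow> trH (f u) = trH (f v) \<and> L u mod 3 = L v mod 3 \<and> k u = k v"
proof
  assume eq: "track u = track v"
  have "l > 0" using index_lt assms by fastforce
  then have "track w mod l = k w" "track w div l = 3 * trH (f w) + L w mod 3" if "w \<in> VG" for w
    using index_lt[OF that] by (simp_all add: track_def)
  then have "k u = k v" "3 * trH (f u) + L u mod 3 = 3 * trH (f v) + L v mod 3"
    using eq assms by metis+
  then show "trH (f u) = trH (f v) \<and> L u mod 3 = L v mod 3 \<and> k u = k v"
    by presburger
qed (simp add: track_def)

lemma track_lt:
  assumes "v \<in> VG"
  shows "track v < 3 * l * t"
proof -
  have "3 * trH (f v) + L v mod 3 < 3 * t"
    using H_track_lt[OF bag_in_VH[OF assms]] by linarith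
  then have "(3 * trH (f v) + L v mod 3 + 1) * l \<le> 3 * t * l"
    by (intro mult_right_mono) simp_all
  then show ?thesis using index_lt[OF assms] by (simp add: track_def algebra_simps)
qed

lemma edge_tracks_distinct:
  assumes "{u, v} \<in> EG"
  shows "track u \<noteq> track v"
proof
  assume "track u = track v"
  have uv: "u \<in> VG" "v \<in> VG" "u \<noteq> v" using graph_edge[OF graph assms] by auto
  with \<open>track u = track v\<close> have same: "trH (f u) = trH (f v)" "L u mod 3 = L v mod 3" "k u = k v"
    by (simp_all add: track_eq_iff)
  have "f u = f v" using edge_bags[OF assms] H_edge_tracks same(1) by blast
  moreover have "L u = L v"
    using edge_layers[OF assms] same(2) by (blast intro: adjacent_eq_if_mod3_eq)
  ultimately show False using index_inj uv same(3) by blast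
qed

lemma order_strict_linear: "strict_linear_order_on {v\<in>VG. track v = i} (order i)"
  unfolding strict_linear_order_on_def
proof (intro conjI)
  show "trans (order i)"
  proof (rule transI)
    fix x y z assume xy: "(x, y) \<in> order i" and yz: "(y, z) \<in> order i"
    then have "x \<in> VG" "trH (f x) = trH (f y)" "trH (f y) = trH (f z)"
      by (auto simp: order_def track_eq_iff)
    with xy yz strict_linear_order_onD(1)[OF H_track_order] show "(x, z) \<in> order i"
      unfolding order_def by (auto dest: transD)
  qed
next
  show "irrefl (order i)"
    using strict_linear_order_onD(2)[OF H_track_order] by (auto simp: irrefl_def order_def)
next
  show "total_on {v\<in>VG. track v = i} (order i)"
  proof (rule total_onI)
    fix u v assume u: "u \<in> {v\<in>VG. track v = i}" and v: "v \<in> {v\<in>VG. track v = i}" and "u \<noteq> v"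
    then have same: "trH (f u) = trH (f v)" "k u = k v" by (auto simp: track_eq_iff)
    show "(u, v) \<in> order i \<or> (v, u) \<in> order i"
    proof (cases "L u = L v")
      case True
      then have "f u \<noteq> f v" using index_inj u v same \<open>u \<noteq> v\<close> by blast
      then have "(f u, f v) \<in> ltH (trH (f u)) \<or> (f v, f u) \<in> ltH (trH (f u))"
        using strict_linear_order_onD(3)[OF H_track_order] bag_in_VH u v same(1)
        unfolding total_on_def by auto
      then show ?thesis using True u v same(1) unfolding order_def by auto
    qed (use u v in \<open>auto simp: order_def\<close>)
  qed
qed

lemma no_X_crossing:
  assumes e1: "{u, v} \<in> EG" and e2: "{x, y} \<in> EG"
    and "track u = track x" "track v = track y" "track u \<noteq> track v"
    and ux: "(u, x) \<in> order (track u)" and yv: "(y, v) \<in> order (track v)"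
  shows False
proof -
  have V: "u \<in> VG" "v \<in> VG" "x \<in> VG" "y \<in> VG"
    using graph_edge[OF graph e1] graph_edge[OF graph e2] by auto
  with assms(3,4) have ux_same: "trH (f u) = trH (f x)" "L u mod 3 = L x mod 3"
    and vy_same: "trH (f v) = trH (f y)" "L v mod 3 = L y mod 3"
    by (simp_all add: track_eq_iff)
  have shift: "int (L x) - int (L u) = int (L y) - int (L v)"
    using adjacent_same_shift_if_mod3_eq[OF ux_same(2) vy_same(2)] edge_layers[OF e1] edge_layers[OF e2]
    by blast
  have "\<not> L u < L x" using shift yv unfolding order_def by auto
  then have "L u = L x" "L v = L y" using ux shift unfolding order_def by auto
  then have fux: "(f u, f x) \<in> ltH (trH (f u))" and fyv: "(f y, f v) \<in> ltH (trH (f v))"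
    using ux yv vy_same(1) unfolding order_def by auto
  show False
  proof (cases "f u = f v")
    case True
    then have "f x = f y" using edge_bags[OF e2] H_edge_tracks ux_same(1) vy_same(1) by metis
    with True fyv have "(f x, f u) \<in> ltH (trH (f u))" by simp
    with fux strict_linear_order_onD(1,2)[OF H_track_order[OF V(1)]] show False
      by (meson irrefl_def transD)
  next
    case False
    then have eh1: "{f u, f v} \<in> EH" using edge_bags[OF e1] by blast
    then have tracks: "trH (f u) \<noteq> trH (f v)" using H_edge_tracks by blast
    then have "f x \<noteq> f y" using ux_same(1) vy_same(1) by metis
    then have eh2: "{f x, f y} \<in> EH" using edge_bags[OF e2] by blast
    have "\<forall>u v x y. {u, v} \<in> EH \<longrightarrow> {x, y} \<in> EH \<longrightarrow> trH u = trH x \<longrightarrow> trH v = trH y \<longrightarrow>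
        trH u \<noteq> trH v \<longrightarrow> (u, x) \<in> ltH (trH u) \<longrightarrow> (y, v) \<in> ltH (trH v) \<longrightarrow> False"
      using layout unfolding track_layout_def by (elim conjE)
    then show False using eh1 eh2 ux_same(1) vy_same(1) tracks fux fyv by blast
  qed
qed

lemma track_layout: "track_layout VG EG (3 * l * t) track order"
  unfolding track_layout_def
  by (intro conjI ballI allI impI; (elim no_X_crossing)?)
    (auto intro: track_lt order_strict_linear dest: edge_tracks_distinct)

end

theorem lemma7:
  fixes VG :: "'a set" and EG :: "'a set set" and VH :: "'b set" and EH :: "'b set set"
    and f :: "'a \<Rightarrow> 'b" and l :: nat
  assumes "graph VG EG" and "graph VH EH" and "l \<ge> 1"
    and "H_partition VG EG VH EH f"
    and "layered_width VG EG f = l"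
  shows "track_number VG EG \<le> 3 * l * track_number VH EH"
proof -
  have "finite VG" using assms(1) by (simp add: graph_def)
  obtain trH ltH where layout: "track_layout VH EH (track_number VH EH) trH ltH"
    using track_number_attained[OF assms(2)] .
  obtain L where layering: "layering VG EG L" and width: "\<And>x i. card {v\<in>VG. f v = x \<and> L v = i} \<le> l"
    using layered_width_attained[OF \<open>finite VG\<close>, of EG f] unfolding assms(5) by blast
  have "card {v\<in>VG. (f v, L v) = c} \<le> l" for c
    using width by (cases c) simp
  then obtain k where "\<And>v. v \<in> VG \<Longrightarrow> k v < l"
    and "\<And>u v. u \<in> VG \<Longrightarrow> v \<in> VG \<Longrightarrow> (f u, L u) = (f v, L v) \<Longrightarrow> k u = k v \<Longrightarrow> u = v"
    using ex_fibrewise_injective_index[OF \<open>finite VG\<close>, of "\<lambda>v. (f v, L v)"] by blast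
  then interpret partition_layering VG EG VH EH f "track_number VH EH" trH ltH L l k
    using assms(1,4) layout layering by unfold_locales auto
  show ?thesis using track_number_le[OF track_layout] .
qed

end
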